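(* For each $t$, \[ \mathbb{E}\Big[\sum_{n<t}\bar L_n(x_n,y_n)-\min_{x\in\mathcal{X}}\max_{y\in\mathcal{Y}}\sum_{n<t}\bar L_n(x,y)\Big]\le G\sum_{n<t}\Big(\mathbb{E}\|x_n-x_{n+1}\|_1+\mathbb{E}\|y_n-y_{n+1}\|_1+\mathbb{E}\|y''_n-y_{n+1}\|_1\Big)+2T^{2/3}(\log d+1)x_{\max}, \] and \[ \mathbb{E}\Big[\min_{x\in\mathcal{X}}\max_{y\in\mathcal{Y}}\sum_{n<t}\bar L_n(x,y)-\sum_{n<t}\bar L_n(x_n,y_n)\Big]\le G\sum_{n<t}\Big(2\,\mathbb{E}\|x_n-x_{n+1}\|_1+\mathbb{E}\|y_n-y_{n+1}\|_1+\mathbb{E}\|y'_n-y_{n+1}\|_1\Big)+2T^{2/3}(\log d+1)x_{\max}. \]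
   Context: Let $\mathcal{X}\subseteq\mathbb{R}^d$ be compact, $x_{\max}:=\max_{x\in\mathcal{X}}\|x\|_1$. For $t=1,\dots,T$, $f_t,c_{it}:\mathcal{X}\to\mathbb{R}$ ($i=1,\dots,I$) are $G_0$-Lipschitz w.r.t. $\ell_1$, $b_i\ge0$, and for $y=(\gamma_1,\dots,\gamma_I)$, $L_t(x,y)=f_t(x)+\sum_i\gamma_i[c_{it}(x)-b_i]$. Fix $\lambda>0$, $y_{\max}>0$, $\mathcal{Y}=[0,y_{\max}]^I$, and $\bar L_n(x,y)=L_n(x,y)+\frac{\lambda}{n^{1/9}}\sum_i\log(\gamma_i+1)$. $G>0$ is a constant such that for all $n$, $\bar L_n$ is $G$-Lipschitz in $x$ (for fixed $y\in\mathcal{Y}$) and in $y$ (for fixed $x\in\mathcal{X}$) with respect to $\ell_1$-norms. A global minimax point of $h$ on $\mathcal{X}\times\mathcal{Y}$ is $(x^*,y^* )$ with $h(x^*,y)\le h(x^*,y^* )\le\max_{y'\in\mathcal{Y}}h(x,y')$ for all $x,y$. Algorithm (FTDPL with $M=1$): $\eta=T^{-2/3}$; at each period $t$, draw $\theta_t\in\mathbb{R}^d$ with i.i.d. coordinates exponentially distributed with parameter $\eta$, independent across $t$, and let $(x_t,y_t)$ be a global minimax point of $(x,y)\mapsto\sum_{n<t}\bar L_n(x,y)-\theta_t^\top x$ on $\mathcal{X}\times\mathcal{Y}$. Define $y'_t=\arg\max_{y\in\mathcal{Y}}\{\sum_{n<t+1}\bar L_n(x_t,y)-\theta_{t+1}^\top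 x_t\}$ and $y''_t=\arg\max_{y\in\mathcal{Y}}\{\sum_{n<t}\bar L_n(x_{t+1},y)-\theta_t^\top x_{t+1}\}$. Expectations are over the $\theta$'s. *)

theory Defs
  imports "HOL-Analysis.Analysis" "HOL-Probability.Probability"
begin

definition l1 :: "real ^ 'n \<Rightarrow> real" where
  "l1 x = (\<Sum>j\<in>UNIV. \<bar>x $ j\<bar>)"

definition l1_lipschitz_on :: "real \<Rightarrow> (real ^ 'n) set \<Rightarrow> (real ^ 'n \<Rightarrow> real) \<Rightarrow> bool" where
  "l1_lipschitz_on G S h \<longleftrightarrow> (\<forall>u\<in>S. \<forall>v\<in>S. \<bar>h u - h v\<bar> \<le> G * l1 (u - v))"

definition Ybox :: "real \<Rightarrow> (real ^ 'i) set" where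
  "Ybox ymax = {y. \<forall>i. 0 \<le> y $ i \<and> y $ i \<le> ymax}"

definition Lbar :: "(nat \<Rightarrow> real ^ 'd \<Rightarrow> real) \<Rightarrow> (nat \<Rightarrow> 'i::finite \<Rightarrow> real ^ 'd \<Rightarrow> real)
    \<Rightarrow> ('i \<Rightarrow> real) \<Rightarrow> real \<Rightarrow> nat \<Rightarrow> real ^ 'd \<Rightarrow> real ^ 'i \<Rightarrow> real" where
  "Lbar f c b lam n x y =
     f n x + (\<Sum>i\<in>UNIV. y $ i * (c n i x - b i))
     + lam / (real n powr (1/9)) * (\<Sum>i\<in>UNIV. ln (y $ i + 1))"

definition global_minimax_point ::
    "('a \<Rightarrow> 'b \<Rightarrow> real) \<Rightarrow> 'a set \<Rightarrow> 'b set \<Rightarrow> 'a \<Rightarrow> 'b \<Rightarrow> bool" where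
  "global_minimax_point h X Y x y \<longleftrightarrow> x \<in> X \<and> y \<in> Y \<and>
     (\<forall>x'\<in>X. \<forall>y'\<in>Y. h x y' \<le> h x y \<and> h x y \<le> (SUP y''\<in>Y. h x' y''))"

text \<open>min over X of max over Y (written with Inf/Sup; attained for compact sets
      and continuous functions).\<close>
definition minmax :: "('a \<Rightarrow> 'b \<Rightarrow> real) \<Rightarrow> 'a set \<Rightarrow> 'b set \<Rightarrow> real" where
  "minmax h X Y = (INF x\<in>X. SUP y\<in>Y. h x y)"

definition is_argmax_on :: "('b \<Rightarrow> real) \<Rightarrow> 'b set \<Rightarrow> 'b \<Rightarrow> bool" where
  "is_argmax_on g Y y \<longleftrightarrow> y \<in> Y \<and> (\<forall>y'\<in>Y. g y' \<le> g y)"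

end

theory Submission
  imports Defs
begin

(*
  Write V_s(theta) = min_x max_y (sum_{n<s} Lbar_n(x,y) - theta.x) for the value of the
  perturbed cumulative game (leader_value s theta), so that (x_s, y_s) is a saddle point of the
  game defining V_s(theta_s).  Comparing the saddle points of two consecutive rounds, the
  increment V_{n+1}(theta) - V_n(theta) is squeezed against Lbar_n(x_n, y_n), up to G times the
  movements of the iterates; this uses theta = theta_{n+1} for the upper and theta = theta_n for
  the lower bound.  All theta_n have the same law, so the expected increments telescope to
  E V_t(theta_1) - E V_1(theta_1).  Finally |V_s(theta) - V_s(0)| <= xmax * max_j |theta_j|, and
  for exponential coordinates of rate eta one has E max_j |theta_j| <= (ln d + 1) / eta, which
  controls both E V_t against the unperturbed min-max value and E V_1 against 0.
*)

section \<open>Min-max values\<close>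

lemma cSUP_abs_diff_le:
  fixes f g :: "'a \<Rightarrow> real"
  assumes "A \<noteq> {}" "bdd_above (g ` A)" "\<And>x. x \<in> A \<Longrightarrow> \<bar>f x - g x\<bar> \<le> c"
  shows "\<bar>(SUP x\<in>A. f x) - (SUP x\<in>A. g x)\<bar> \<le> c"
proof -
  obtain B where B: "\<And>x. x \<in> A \<Longrightarrow> g x \<le> B"
    using assms(2) by (auto simp: bdd_above_def)
  have bdd_f: "bdd_above (f ` A)"
    using B assms(3) by (intro bdd_aboveI2[where M = "B + c"]) (smt (verit))
  have "f x \<le> (SUP x\<in>A. g x) + c" if "x \<in> A" for x
    using cSUP_upper[OF that assms(2)] assms(3)[OF that] by linarith
  moreover have "g x \<le> (SUP x\<in>A. f x) + c" if "x \<in> A" for x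
    using cSUP_upper[OF that bdd_f] assms(3)[OF that] by linarith
  ultimately have "(SUP x\<in>A. f x) \<le> (SUP x\<in>A. g x) + c" "(SUP x\<in>A. g x) \<le> (SUP x\<in>A. f x) + c"
    by (auto intro!: cSUP_least assms(1))
  then show ?thesis by linarith
qed

lemma cINF_abs_diff_le:
  fixes f g :: "'a \<Rightarrow> real"
  assumes "A \<noteq> {}" "bdd_below (g ` A)" "\<And>x. x \<in> A \<Longrightarrow> \<bar>f x - g x\<bar> \<le> c"
  shows "\<bar>(INF x\<in>A. f x) - (INF x\<in>A. g x)\<bar> \<le> c"
proof -
  obtain B where B: "\<And>x. x \<in> A \<Longrightarrow> B \<le> g x"
    using assms(2) by (auto simp: bdd_below_def)
  have bdd_f: "bdd_below (f ` A)"
    using B assms(3) by (intro bdd_belowI2[where m = "B - c"]) (smt (verit))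
  have "(INF x\<in>A. g x) - c \<le> f x" if "x \<in> A" for x
    using cINF_lower[OF assms(2) that] assms(3)[OF that] by linarith
  moreover have "(INF x\<in>A. f x) - c \<le> g x" if "x \<in> A" for x
    using cINF_lower[OF bdd_f that] assms(3)[OF that] by linarith
  ultimately have "(INF x\<in>A. g x) - c \<le> (INF x\<in>A. f x)" "(INF x\<in>A. f x) - c \<le> (INF x\<in>A. g x)"
    by (auto intro!: cINF_greatest assms(1))
  then show ?thesis by linarith
qed

lemma bounded_minmax_bdd:
  fixes h :: "'a \<Rightarrow> 'b \<Rightarrow> real"
  assumes "Y \<noteq> {}" "\<And>x y. x \<in> X \<Longrightarrow> y \<in> Y \<Longrightarrow> \<bar>h x y\<bar> \<le> B"
  shows "x \<in> X \<Longrightarrow> bdd_above (h x ` Y)"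
    and "bdd_below ((\<lambda>x. SUP y\<in>Y. h x y) ` X)"
proof -
  show bdd: "bdd_above (h x ` Y)" if "x \<in> X" for x
    using assms(2)[OF that] by (intro bdd_aboveI2[where M = B]) (simp add: abs_le_iff)
  obtain y0 where "y0 \<in> Y" using assms(1) by blast
  have "- B \<le> (SUP y\<in>Y. h x y)" if "x \<in> X" for x
    using assms(2)[OF that \<open>y0 \<in> Y\<close>] cSUP_upper[OF \<open>y0 \<in> Y\<close> bdd[OF that]] by linarith
  then show "bdd_below ((\<lambda>x. SUP y\<in>Y. h x y) ` X)"
    by (intro bdd_belowI2)
qed

lemma minmax_abs_diff_le:
  fixes h g :: "'a \<Rightarrow> 'b \<Rightarrow> real"
  assumes "X \<noteq> {}" "Y \<noteq> {}"
    and "\<And>x y. x \<in> X \<Longrightarrow> y \<in> Y \<Longrightarrow> \<bar>g x y\<bar> \<le> B"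
    and "\<And>x y. x \<in> X \<Longrightarrow> y \<in> Y \<Longrightarrow> \<bar>h x y - g x y\<bar> \<le> c"
  shows "\<bar>minmax h X Y - minmax g X Y\<bar> \<le> c"
proof -
  note bdd = bounded_minmax_bdd[where h = g, OF assms(2,3)]
  show ?thesis
    unfolding minmax_def using assms bdd by (intro cINF_abs_diff_le cSUP_abs_diff_le) auto
qed

lemma minmax_eq_at_global_minimax_point:
  assumes "global_minimax_point h X Y x y"
  shows "minmax h X Y = h x y"
proof -
  have x: "x \<in> X" and y: "y \<in> Y"
    and saddle: "\<And>x' y'. x' \<in> X \<Longrightarrow> y' \<in> Y \<Longrightarrow> h x y' \<le> h x y \<and> h x y \<le> (SUP y''\<in>Y. h x' y'')"
    using assms unfolding global_minimax_point_def by auto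
  have "(SUP y'\<in>Y. h x y') = h x y"
    using y saddle[OF x] by (intro cSup_eq_maximum) auto
  then show ?thesis
    unfolding minmax_def using x y saddle by (intro cInf_eq_minimum) (auto intro!: image_eqI)
qed

lemma minmax_le_at_argmax:
  fixes h :: "'a \<Rightarrow> 'b \<Rightarrow> real"
  assumes "x \<in> X" "is_argmax_on (h x) Y y"
    and "\<And>x y. x \<in> X \<Longrightarrow> y \<in> Y \<Longrightarrow> \<bar>h x y\<bar> \<le> B"
  shows "minmax h X Y \<le> h x y"
proof -
  have "Y \<noteq> {}" using assms(2) by (auto simp: is_argmax_on_def)
  have "(SUP y'\<in>Y. h x y') = h x y"
    using assms(2) by (intro cSup_eq_maximum) (auto simp: is_argmax_on_def)
  moreover have "bdd_below ((\<lambda>x. SUP y\<in>Y. h x y) ` X)"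
    by (rule bounded_minmax_bdd(2)[where h = h, OF \<open>Y \<noteq> {}\<close> assms(3)])
  ultimately show ?thesis
    unfolding minmax_def using cINF_lower[OF _ assms(1)] by fastforce
qed

lemma is_argmax_on_diff_const: "is_argmax_on (\<lambda>y. g y - c) Y y \<longleftrightarrow> is_argmax_on g Y y"
  by (simp add: is_argmax_on_def)

section \<open>The l1 norm\<close>

lemma l1_nonneg: "0 \<le> l1 x"
  unfolding l1_def by (auto intro: sum_nonneg)

lemma l1_minus_commute: "l1 (u - v) = l1 (v - u)"
  unfolding l1_def by (simp add: abs_minus_commute)

lemma l1_triangle: "l1 (u - w) \<le> l1 (u - v) + l1 (v - w)"
  unfolding l1_def sum.distrib[symmetric] by (intro sum_mono) auto

lemma l1_diff_le_add: "l1 (u - v) \<le> l1 u + l1 v"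
  unfolding l1_def sum.distrib[symmetric] by (intro sum_mono) auto

lemma l1_le_card_norm: "l1 (x :: real ^ 'n) \<le> real CARD('n) * norm x"
proof -
  have "l1 x \<le> (\<Sum>j\<in>(UNIV :: 'n set). norm x)"
    unfolding l1_def by (intro sum_mono component_le_norm_cart)
  then show ?thesis by simp
qed

(* For 0 \<le> a an upper bound of max_j |v_j| whose expectation, unlike that of the maximum,
   splits over the coordinates. *)
definition linf_majorant :: "real \<Rightarrow> real ^ 'n \<Rightarrow> real" where
  "linf_majorant a v = a + (\<Sum>j\<in>UNIV. max (\<bar>v $ j\<bar> - a) 0)"

lemma linf_majorant_nonneg: "0 \<le> a \<Longrightarrow> 0 \<le> linf_majorant a v"
  unfolding linf_majorant_def by (simp add: add_nonneg_nonneg sum_nonneg)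

lemma abs_inner_le_linf_majorant:
  fixes v x :: "real ^ 'n"
  assumes "0 \<le> a"
  shows "\<bar>inner v x\<bar> \<le> linf_majorant a v * l1 x"
proof -
  have "\<bar>v $ j\<bar> \<le> linf_majorant a v" for j
    using member_le_sum[of j UNIV "\<lambda>k. max (\<bar>v $ k\<bar> - a) 0"]
    unfolding linf_majorant_def by fastforce
  then have "(\<Sum>j\<in>UNIV. \<bar>v $ j\<bar> * \<bar>x $ j\<bar>) \<le> (\<Sum>j\<in>UNIV. linf_majorant a v * \<bar>x $ j\<bar>)"
    by (intro sum_mono mult_right_mono) auto
  moreover have "\<bar>inner v x\<bar> \<le> (\<Sum>j\<in>UNIV. \<bar>v $ j\<bar> * \<bar>x $ j\<bar>)"
    unfolding inner_vec_def by (rule order_trans[OF sum_abs]) (simp add: abs_mult)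
  ultimately show ?thesis
    unfolding l1_def by (simp add: sum_distrib_left)
qed

lemma abs_inner_le_l1: "\<bar>inner v x\<bar> \<le> l1 v * l1 x"
  using abs_inner_le_linf_majorant[of 0 v x] by (simp add: linf_majorant_def l1_def)

lemma zero_mem_Ybox: "0 \<le> ymax \<Longrightarrow> 0 \<in> Ybox ymax"
  by (simp add: Ybox_def)

lemma bdd_above_l1_Ybox: "bdd_above (l1 ` (Ybox ymax :: (real ^ 'i) set))"
proof (rule bdd_aboveI2)
  fix y :: "real ^ 'i" assume "y \<in> Ybox ymax"
  then show "l1 y \<le> real CARD('i) * ymax"
    unfolding l1_def Ybox_def using sum_bounded_above[of UNIV "\<lambda>j. \<bar>y $ j\<bar>" ymax] by simp
qed

lemma bdd_above_l1_compact:
  fixes S :: "(real ^ 'n) set"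
  assumes "compact S"
  shows "bdd_above (l1 ` S)"
proof -
  obtain K where "\<And>x. x \<in> S \<Longrightarrow> norm x \<le> K"
    using compact_imp_bounded[OF assms] by (auto simp: bounded_iff)
  then have "l1 x \<le> real CARD('n) * K" if "x \<in> S" for x
    using l1_le_card_norm[of x] that by (meson mult_left_mono of_nat_0_le_iff order_trans)
  then show ?thesis
    by (rule bdd_aboveI2)
qed

section \<open>Measurability and integrals\<close>

lemma borel_measurable_l1 [measurable]: "l1 \<in> borel_measurable borel"
  unfolding l1_def[abs_def] by (intro borel_measurable_sum borel_measurable_abs borel_measurable_nth)

lemma borel_measurable_vec:
  fixes F :: "'a \<Rightarrow> real ^ 'n"
  assumes "\<And>j. (\<lambda>\<omega>. F \<omega> $ j) \<in> borel_measurable N"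
  shows "F \<in> borel_measurable N"
proof (subst borel_measurable_euclidean_space, intro ballI)
  fix b :: "real ^ 'n" assume "b \<in> Basis"
  then obtain j where "b = axis j 1" by (auto simp: Basis_vec_def)
  then show "(\<lambda>\<omega>. F \<omega> \<bullet> b) \<in> borel_measurable N"
    using assms by (simp add: inner_axis)
qed

lemma (in finite_measure) integrable_l1_diff:
  fixes U V :: "'a \<Rightarrow> real ^ 'n"
  assumes "U \<in> borel_measurable M" "V \<in> borel_measurable M" "bdd_above (l1 ` S)"
    and "\<And>\<omega>. \<omega> \<in> space M \<Longrightarrow> U \<omega> \<in> S" "\<And>\<omega>. \<omega> \<in> space M \<Longrightarrow> V \<omega> \<in> S"
  shows "integrable M (\<lambda>\<omega>. l1 (U \<omega> - V \<omega>))"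
proof -
  obtain B where B: "\<And>v. v \<in> S \<Longrightarrow> l1 v \<le> B"
    using assms(3) by (auto simp: bdd_above_def)
  have "l1 (U \<omega> - V \<omega>) \<le> 2 * B" if "\<omega> \<in> space M" for \<omega>
    using l1_diff_le_add[of "U \<omega>" "V \<omega>"] B[OF assms(4)[OF that]] B[OF assms(5)[OF that]] by linarith
  then show ?thesis
    using assms(1,2)
    by (intro integrable_const_bound[where B = "2 * B"] AE_I2) (auto simp: abs_of_nonneg[OF l1_nonneg])
qed

lemma borel_measurable_if_l1_lipschitz:
  fixes g :: "real ^ 'n \<Rightarrow> real"
  assumes "\<And>u v. \<bar>g u - g v\<bar> \<le> C * l1 (u - v)"
  shows "g \<in> borel_measurable borel"
proof (intro borel_measurable_continuous_onI lipschitz_on_continuous_on)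
  show "(\<bar>C\<bar> * real CARD('n))-lipschitz_on UNIV g"
  proof (rule lipschitz_onI)
    fix u v :: "real ^ 'n"
    have "\<bar>g u - g v\<bar> \<le> \<bar>C\<bar> * l1 (u - v)"
      using assms[of u v] abs_ge_self[of C] l1_nonneg[of "u - v"] by (meson mult_right_mono order_trans)
    also have "\<dots> \<le> \<bar>C\<bar> * (real CARD('n) * norm (u - v))"
      by (intro mult_left_mono l1_le_card_norm) auto
    finally show "dist (g u) (g v) \<le> \<bar>C\<bar> * real CARD('n) * dist u v"
      by (simp add: dist_norm dist_real_def mult.assoc)
  qed simp
qed

(* 0 \<le> c covers a non-integrable f, whose integral is the junk value 0. *)
lemma integral_le_if_le_integrable:
  fixes f g :: "'a \<Rightarrow> real"
  assumes "integrable M g" "\<And>x. x \<in> space M \<Longrightarrow> f x \<le> g x" "integral\<^sup>L M g \<le> c" "0 \<le> c"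
  shows "integral\<^sup>L M f \<le> c"
proof (cases "integrable M f")
  case True
  then show ?thesis
    using integral_mono[OF True assms(1,2)] assms(3) by linarith
next
  case False
  then show ?thesis
    using assms(4) by (simp add: not_integrable_integral_eq)
qed

lemma (in prob_space) integral_sum_le_telescoping:
  fixes A D :: "nat \<Rightarrow> 'a \<Rightarrow> real" and Z :: "nat \<Rightarrow> nat \<Rightarrow> 'a \<Rightarrow> real" and e :: "nat \<Rightarrow> real"
  assumes "1 \<le> t"
    and D: "\<And>n. n \<in> {1..<t} \<Longrightarrow> integrable M (D n)"
    and Z: "\<And>s n. n \<in> {1..<t} \<Longrightarrow> integrable M (Z s n)"
    and e: "\<And>s n. n \<in> {1..<t} \<Longrightarrow> integral\<^sup>L M (Z s n) = e s"
    and step: "\<And>n \<omega>. n \<in> {1..<t} \<Longrightarrow> \<omega> \<in> space M \<Longrightarrow> A n \<omega> \<le> D n \<omega> + Z (n+1) n \<omega> - Z n n \<omega>"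
    and bound: "(\<Sum>n\<in>{1..<t}. integral\<^sup>L M (D n)) + e t - e 1 - m \<le> c" and "0 \<le> c"
  shows "(\<integral>\<omega>. (\<Sum>n\<in>{1..<t}. A n \<omega>) - m \<partial>M) \<le> c"
proof -
  define g where "g \<omega> = (\<Sum>n\<in>{1..<t}. D n \<omega> + Z (n+1) n \<omega> - Z n n \<omega>) - m" for \<omega>
  have summand_int: "integrable M (\<lambda>\<omega>. D n \<omega> + Z (n+1) n \<omega> - Z n n \<omega>)" if "n \<in> {1..<t}" for n
    using D[OF that] Z[OF that] by auto
  have summand_integral: "(\<integral>\<omega>. D n \<omega> + Z (n+1) n \<omega> - Z n n \<omega> \<partial>M) = integral\<^sup>L M (D n) + (e (n+1) - e n)"
    if "n \<in> {1..<t}" for n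
    using D[OF that] Z[OF that] e[OF that] by simp
  have sum_int: "integrable M (\<lambda>\<omega>. \<Sum>n\<in>{1..<t}. D n \<omega> + Z (n+1) n \<omega> - Z n n \<omega>)"
    using summand_int by (rule Bochner_Integration.integrable_sum)
  then have g_int: "integrable M g"
    unfolding g_def by (intro Bochner_Integration.integrable_diff integrable_const)
  have "integral\<^sup>L M g = (\<integral>\<omega>. (\<Sum>n\<in>{1..<t}. D n \<omega> + Z (n+1) n \<omega> - Z n n \<omega>) \<partial>M) - m"
    unfolding g_def using sum_int by (simp add: prob_space)
  also have "(\<integral>\<omega>. (\<Sum>n\<in>{1..<t}. D n \<omega> + Z (n+1) n \<omega> - Z n n \<omega>) \<partial>M)
      = (\<Sum>n\<in>{1..<t}. \<integral>\<omega>. D n \<omega> + Z (n+1) n \<omega> - Z n n \<omega> \<partial>M)"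
    by (rule Bochner_Integration.integral_sum[OF summand_int])
  also have "\<dots> = (\<Sum>n\<in>{1..<t}. integral\<^sup>L M (D n) + (e (n+1) - e n))"
    by (rule sum.cong[OF refl summand_integral])
  also have "\<dots> = (\<Sum>n\<in>{1..<t}. integral\<^sup>L M (D n)) + (e t - e 1)"
    using sum_Suc_diff'[OF \<open>1 \<le> t\<close>, of e] by (simp add: sum.distrib)
  finally have g_le: "integral\<^sup>L M g \<le> c"
    using bound by linarith
  have "(\<Sum>n\<in>{1..<t}. A n \<omega>) - m \<le> g \<omega>" if "\<omega> \<in> space M" for \<omega>
    unfolding g_def using step that by (intro diff_right_mono sum_mono) auto
  then show ?thesis
    by (rule integral_le_if_le_integrable[OF g_int _ g_le \<open>0 \<le> c\<close>])
qed

section \<open>Exponential perturbations\<close>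

lemma (in prob_space) integral_exponential_excess:
  fixes Z :: "'a \<Rightarrow> real"
  assumes "0 < l" "0 \<le> a"
    and Z: "distributed M lborel Z (exponential_density l)"
  shows "integrable M (\<lambda>\<omega>. max (\<bar>Z \<omega>\<bar> - a) 0)"
    and "(\<integral>\<omega>. max (\<bar>Z \<omega>\<bar> - a) 0 \<partial>M) = exp (- a * l) / l"
proof -
  have "integrable M Z"
    using erlang_ith_moment_integrable[OF assms(1) Z, of 1] by simp
  moreover have "Z \<in> borel_measurable M"
    using Z by (simp add: distributed_def)
  ultimately show "integrable M (\<lambda>\<omega>. max (\<bar>Z \<omega>\<bar> - a) 0)"
    using assms(2) by (auto intro: Bochner_Integration.integrable_bound[OF integrable_abs])
  have density_nonneg: "0 \<le> exponential_density l x" for x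
    using assms(1) by (auto simp: exponential_density_def)
  have shifted: "exponential_density l (a + x) * max (\<bar>a + x\<bar> - a) 0
      = exp (- a * l) * (exponential_density l x * x)" for x
  proof (cases "x < 0")
    case True
    then show ?thesis using assms(2) by (auto simp: exponential_density_def max_def)
  next
    case False
    have "exp (- (a + x) * l) = exp (- a * l) * exp (- x * l)"
      by (simp add: algebra_simps flip: exp_add)
    then show ?thesis using False assms(2) by (simp add: exponential_density_def)
  qed
  have "(\<integral>\<omega>. max (\<bar>Z \<omega>\<bar> - a) 0 \<partial>M)
      = (\<integral>x. exponential_density l x * max (\<bar>x\<bar> - a) 0 \<partial>lborel)"
    by (rule distributed_integral[OF Z, symmetric]) (auto simp: density_nonneg)
  also have "\<dots> = (\<integral>x. exponential_density l (a + x) * max (\<bar>a + x\<bar> - a) 0 \<partial>lborel)"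
    by (subst lborel_integral_real_affine[where c = 1 and t = a]) simp_all
  also have "\<dots> = exp (- a * l) * (\<integral>x. exponential_density l x * x \<partial>lborel)"
    by (simp add: shifted)
  also have "(\<integral>x. exponential_density l x * x \<partial>lborel) = expectation Z"
    by (rule distributed_integral[OF Z]) (auto simp: density_nonneg)
  also have "expectation Z = 1 / l"
    by (rule exponential_distributed_expectation[OF assms(1) Z])
  finally show "(\<integral>\<omega>. max (\<bar>Z \<omega>\<bar> - a) 0 \<partial>M) = exp (- a * l) / l"
    by simp
qed

(* The threshold a = ln d / l minimises a + d exp (- a l) / l. *)
lemma (in prob_space) integral_linf_majorant_exponential:
  fixes V :: "'a \<Rightarrow> real ^ 'n"
  assumes "0 < l"
    and "\<And>j. distributed M lborel (\<lambda>\<omega>. V \<omega> $ j) (exponential_density l)"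
  defines "a \<equiv> ln (real CARD('n)) / l"
  shows "integrable M (\<lambda>\<omega>. linf_majorant a (V \<omega>))"
    and "(\<integral>\<omega>. linf_majorant a (V \<omega>) \<partial>M) = (ln (real CARD('n)) + 1) / l"
proof -
  have "0 \<le> a"
    unfolding a_def using assms(1) by simp
  note excess = integral_exponential_excess[OF assms(1) this assms(2)]
  show "integrable M (\<lambda>\<omega>. linf_majorant a (V \<omega>))"
    unfolding linf_majorant_def by (intro Bochner_Integration.integrable_add integrable_const
        Bochner_Integration.integrable_sum excess(1))
  have "exp (- a * l) = 1 / real CARD('n)"
    unfolding a_def using assms(1) by (simp add: exp_minus inverse_eq_divide)
  then have "(\<integral>\<omega>. linf_majorant a (V \<omega>) \<partial>M) = a + 1 / l"
    unfolding linf_majorant_def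
    by (simp add: Bochner_Integration.integral_add Bochner_Integration.integral_sum
        Bochner_Integration.integrable_sum excess prob_space)
  then show "(\<integral>\<omega>. linf_majorant a (V \<omega>) \<partial>M) = (ln (real CARD('n)) + 1) / l"
    by (simp add: a_def add_divide_distrib)
qed

lemma (in prob_space) distr_vec_of_indep_family:
  fixes Z :: "'k \<Rightarrow> 'a \<Rightarrow> real ^ 'n"
  assumes indep: "indep_vars (\<lambda>_. borel) (\<lambda>p \<omega>. Z (fst p) \<omega> $ snd p) (K \<times> UNIV)"
    and "r \<in> K"
    and distr: "\<And>j. distributed M lborel (\<lambda>\<omega>. Z r \<omega> $ j) g"
  shows "distr M (Pi\<^sub>M UNIV (\<lambda>_. borel)) (\<lambda>\<omega>. vec_nth (Z r \<omega>))
    = Pi\<^sub>M UNIV (\<lambda>_. density lborel g)"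
proof -
  define I where "I = {r} \<times> (UNIV :: 'n set)"
  define D where "D = density lborel g"
  have D_distr: "distr M borel (\<lambda>\<omega>. Z r \<omega> $ j) = D" for j
    using distr[of j] by (simp add: distributed_def D_def cong: distr_cong)
  have "prob_space D"
    using prob_space_distr[of "\<lambda>\<omega>. Z r \<omega> $ undefined" borel] distr[of undefined]
    by (auto simp: distributed_def D_distr)
  have rv: "random_variable borel (\<lambda>\<omega>. Z (fst p) \<omega> $ snd p)" if "p \<in> I" for p
    using distr[of "snd p"] that by (auto simp: I_def distributed_def)
  have indep_I: "indep_vars (\<lambda>_. borel) (\<lambda>p \<omega>. Z (fst p) \<omega> $ snd p) I"
    using \<open>r \<in> K\<close> by (intro indep_vars_subset[OF indep]) (auto simp: I_def)
  have "I \<noteq> {}"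
    by (simp add: I_def)
  have "distr M (Pi\<^sub>M I (\<lambda>_. borel)) (\<lambda>\<omega>. \<lambda>p\<in>I. Z (fst p) \<omega> $ snd p)
      = Pi\<^sub>M I (\<lambda>p. distr M borel (\<lambda>\<omega>. Z (fst p) \<omega> $ snd p))"
    using indep_vars_iff_distr_eq_PiM'[where M' = "\<lambda>_. borel", OF \<open>I \<noteq> {}\<close> rv] indep_I
    by (rule iffD1)
  also have "\<dots> = Pi\<^sub>M I (\<lambda>_. D)"
    by (rule PiM_cong) (auto simp: I_def D_distr)
  finally have joint: "distr M (Pi\<^sub>M I (\<lambda>_. borel)) (\<lambda>\<omega>. \<lambda>p\<in>I. Z (fst p) \<omega> $ snd p)
      = Pi\<^sub>M I (\<lambda>_. D)" .
  define R where "R = (\<lambda>h :: 'k \<times> 'n \<Rightarrow> real. \<lambda>j\<in>UNIV. h (r, j))"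
  have R_meas: "R \<in> measurable (Pi\<^sub>M I (\<lambda>_. borel)) (Pi\<^sub>M UNIV (\<lambda>_. borel))"
    unfolding R_def by (intro measurable_restrict measurable_component_singleton) (auto simp: I_def)
  have T_meas: "(\<lambda>\<omega>. \<lambda>p\<in>I. Z (fst p) \<omega> $ snd p) \<in> measurable M (Pi\<^sub>M I (\<lambda>_. borel))"
    by (intro measurable_restrict rv)
  have "(\<lambda>\<omega>. vec_nth (Z r \<omega>)) = R \<circ> (\<lambda>\<omega>. \<lambda>p\<in>I. Z (fst p) \<omega> $ snd p)"
    by (simp add: R_def I_def fun_eq_iff)
  then have "distr M (Pi\<^sub>M UNIV (\<lambda>_. borel)) (\<lambda>\<omega>. vec_nth (Z r \<omega>))
      = distr (distr M (Pi\<^sub>M I (\<lambda>_. borel)) (\<lambda>\<omega>. \<lambda>p\<in>I. Z (fst p) \<omega> $ snd p)) (Pi\<^sub>M UNIV (\<lambda>_. borel)) R"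
    by (simp only: distr_distr[OF R_meas T_meas])
  also have "\<dots> = distr (Pi\<^sub>M I (\<lambda>_. D)) (Pi\<^sub>M UNIV (\<lambda>_. D)) R"
    unfolding joint by (intro distr_cong sets_PiM_cong) (auto simp: D_def)
  also have "\<dots> = Pi\<^sub>M UNIV (\<lambda>_. D)"
    using distr_PiM_reindex[of I "\<lambda>_. D" "\<lambda>j. (r, j)" UNIV] \<open>prob_space D\<close>
    by (auto simp: R_def I_def inj_on_def)
  finally show ?thesis
    unfolding D_def .
qed

lemma (in prob_space) integral_vec_of_indep_family:
  fixes Z :: "'k \<Rightarrow> 'a \<Rightarrow> real ^ 'n" and W :: "real ^ 'n \<Rightarrow> real"
  assumes "indep_vars (\<lambda>_. borel) (\<lambda>p \<omega>. Z (fst p) \<omega> $ snd p) (K \<times> UNIV)"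
    and "r \<in> K"
    and distr: "\<And>j. distributed M lborel (\<lambda>\<omega>. Z r \<omega> $ j) g"
    and W: "W \<in> borel_measurable borel"
  shows "(\<integral>\<omega>. W (Z r \<omega>) \<partial>M) = (\<integral>v. W (vec_lambda v) \<partial>Pi\<^sub>M UNIV (\<lambda>_. density lborel g))"
proof -
  have vec_lambda_meas:
    "(vec_lambda :: ('n \<Rightarrow> real) \<Rightarrow> real ^ 'n) \<in> borel_measurable (Pi\<^sub>M UNIV (\<lambda>_. borel))"
  proof (rule borel_measurable_vec)
    fix j :: 'n
    show "(\<lambda>v. vec_lambda v $ j) \<in> borel_measurable (Pi\<^sub>M UNIV (\<lambda>_. borel))"
      unfolding vec_lambda_beta by (rule measurable_component_singleton) simp
  qed
  have "(\<lambda>\<omega>. Z r \<omega> $ j) \<in> borel_measurable M" for j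
    using distr[of j] by (simp add: distributed_def)
  then have "(\<lambda>\<omega>. vec_nth (Z r \<omega>)) \<in> measurable M (Pi\<^sub>M UNIV (\<lambda>_. borel))"
    using measurable_restrict[of UNIV "\<lambda>j \<omega>. Z r \<omega> $ j"] by (simp only: restrict_UNIV)
  then have "(\<integral>v. W (vec_lambda v) \<partial>distr M (Pi\<^sub>M UNIV (\<lambda>_. borel)) (\<lambda>\<omega>. vec_nth (Z r \<omega>)))
      = (\<integral>\<omega>. W (vec_lambda (vec_nth (Z r \<omega>))) \<partial>M)"
    using measurable_compose[OF vec_lambda_meas W] by (rule integral_distr)
  then show ?thesis
    unfolding distr_vec_of_indep_family[OF assms(1-3)] vec_nth_inverse by (rule sym)
qed

section \<open>The perturbed cumulative game\<close>

locale online_minimax_game =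
  fixes X :: "(real ^ 'd) set" and Y :: "(real ^ 'i) set"
    and L :: "nat \<Rightarrow> real ^ 'd \<Rightarrow> real ^ 'i \<Rightarrow> real" and G :: real
  assumes X_nonempty: "X \<noteq> {}" and Y_nonempty: "Y \<noteq> {}"
    and bdd_above_l1_X: "bdd_above (l1 ` X)" and bdd_above_l1_Y: "bdd_above (l1 ` Y)"
    and G_nonneg: "0 \<le> G"
    and lipschitz_x: "\<And>n y. 1 \<le> n \<Longrightarrow> y \<in> Y \<Longrightarrow> l1_lipschitz_on G X (\<lambda>x. L n x y)"
    and lipschitz_y: "\<And>n x. 1 \<le> n \<Longrightarrow> x \<in> X \<Longrightarrow> l1_lipschitz_on G Y (\<lambda>y. L n x y)"
begin

definition xmax :: real where
  "xmax = (SUP x\<in>X. l1 x)"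

definition leader_value :: "nat \<Rightarrow> real ^ 'd \<Rightarrow> real" where
  "leader_value s \<theta> = minmax (\<lambda>x y. (\<Sum>n\<in>{1..<s}. L n x y) - inner \<theta> x) X Y"

lemma l1_le_xmax: "x \<in> X \<Longrightarrow> l1 x \<le> xmax"
  unfolding xmax_def by (rule cSUP_upper[OF _ bdd_above_l1_X])

lemma xmax_nonneg: "0 \<le> xmax"
  using X_nonempty l1_le_xmax l1_nonneg by (meson ex_in_conv order_trans)

lemma abs_inner_le_xmax: "x \<in> X \<Longrightarrow> \<bar>inner v x\<bar> \<le> l1 v * xmax"
  using abs_inner_le_l1[of v x] l1_le_xmax[of x] l1_nonneg[of v]
  by (meson mult_left_mono order_trans)

lemma l1_diff_X_le: "x \<in> X \<Longrightarrow> x' \<in> X \<Longrightarrow> l1 (x - x') \<le> 2 * xmax"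
  using l1_diff_le_add[of x x'] l1_le_xmax[of x] l1_le_xmax[of x'] by linarith

lemma l1_diff_Y_bounded:
  obtains D where "\<And>y y'. y \<in> Y \<Longrightarrow> y' \<in> Y \<Longrightarrow> l1 (y - y') \<le> D"
proof -
  obtain B where "\<And>y. y \<in> Y \<Longrightarrow> l1 y \<le> B"
    using bdd_above_l1_Y by (auto simp: bdd_above_def)
  then show ?thesis
    by (intro that[of "2 * B"]) (metis l1_diff_le_add add_mono mult_2 order_trans)
qed

lemma loss_bounded:
  assumes "1 \<le> n"
  obtains B where "\<And>x y. x \<in> X \<Longrightarrow> y \<in> Y \<Longrightarrow> \<bar>L n x y\<bar> \<le> B"
proof -
  obtain x0 y0 where "x0 \<in> X" "y0 \<in> Y"
    using X_nonempty Y_nonempty by blast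
  obtain D where D: "\<And>y y'. y \<in> Y \<Longrightarrow> y' \<in> Y \<Longrightarrow> l1 (y - y') \<le> D"
    using l1_diff_Y_bounded by blast
  have "\<bar>L n x y\<bar> \<le> \<bar>L n x0 y0\<bar> + G * (2 * xmax + D)" if "x \<in> X" "y \<in> Y" for x y
  proof -
    have "\<bar>L n x y - L n x0 y\<bar> \<le> G * l1 (x - x0)"
      using lipschitz_x[OF assms \<open>y \<in> Y\<close>] \<open>x \<in> X\<close> \<open>x0 \<in> X\<close> by (auto simp: l1_lipschitz_on_def)
    moreover have "\<bar>L n x0 y - L n x0 y0\<bar> \<le> G * l1 (y - y0)"
      using lipschitz_y[OF assms \<open>x0 \<in> X\<close>] \<open>y \<in> Y\<close> \<open>y0 \<in> Y\<close> by (auto simp: l1_lipschitz_on_def)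
    moreover have "G * l1 (x - x0) \<le> G * (2 * xmax)" "G * l1 (y - y0) \<le> G * D"
      using G_nonneg l1_diff_X_le[OF \<open>x \<in> X\<close> \<open>x0 \<in> X\<close>] D[OF \<open>y \<in> Y\<close> \<open>y0 \<in> Y\<close>]
      by (auto intro: mult_left_mono)
    ultimately show ?thesis
      using abs_ge_self[of "L n x0 y0"] abs_ge_minus_self[of "L n x0 y0"]
      unfolding abs_le_iff distrib_left by linarith
  qed
  then show ?thesis
    by (rule that)
qed

lemma perturbed_cumulative_loss_bounded:
  obtains B where "\<And>x y. x \<in> X \<Longrightarrow> y \<in> Y \<Longrightarrow> \<bar>(\<Sum>n\<in>{1..<s}. L n x y) - inner \<theta> x\<bar> \<le> B"
proof -
  have "\<forall>n\<in>{1..<s}. \<exists>B. \<forall>x\<in>X. \<forall>y\<in>Y. \<bar>L n x y\<bar> \<le> B"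
    using loss_bounded by (metis atLeastLessThan_iff)
  then obtain B where B: "\<And>n x y. n \<in> {1..<s} \<Longrightarrow> x \<in> X \<Longrightarrow> y \<in> Y \<Longrightarrow> \<bar>L n x y\<bar> \<le> B n"
    by (metis bchoice)
  have "\<bar>(\<Sum>n\<in>{1..<s}. L n x y) - inner \<theta> x\<bar> \<le> (\<Sum>n\<in>{1..<s}. B n) + l1 \<theta> * xmax"
    if "x \<in> X" "y \<in> Y" for x y
  proof -
    have "\<bar>\<Sum>n\<in>{1..<s}. L n x y\<bar> \<le> (\<Sum>n\<in>{1..<s}. B n)"
      using B that by (intro order_trans[OF sum_abs] sum_mono)
    then show ?thesis
      using abs_inner_le_xmax[OF \<open>x \<in> X\<close>, of \<theta>] by linarith
  qed
  then show ?thesis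
    by (rule that)
qed

lemma leader_value_diff_le:
  assumes "\<And>x. x \<in> X \<Longrightarrow> \<bar>inner (\<theta> - \<theta>') x\<bar> \<le> c"
  shows "\<bar>leader_value s \<theta> - leader_value s \<theta>'\<bar> \<le> c"
proof -
  obtain B where "\<And>x y. x \<in> X \<Longrightarrow> y \<in> Y \<Longrightarrow> \<bar>(\<Sum>n\<in>{1..<s}. L n x y) - inner \<theta>' x\<bar> \<le> B"
    using perturbed_cumulative_loss_bounded by blast
  then show ?thesis
    unfolding leader_value_def using assms
    by (intro minmax_abs_diff_le[OF X_nonempty Y_nonempty]) (auto simp: inner_diff_left abs_minus_commute)
qed

lemma leader_value_lipschitz: "\<bar>leader_value s \<theta> - leader_value s \<theta>'\<bar> \<le> xmax * l1 (\<theta> - \<theta>')"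
  by (rule leader_value_diff_le) (metis abs_inner_le_xmax mult.commute)

lemma borel_measurable_leader_value: "leader_value s \<in> borel_measurable borel"
  using leader_value_lipschitz by (rule borel_measurable_if_l1_lipschitz)

lemma leader_value_zero: "leader_value s 0 = minmax (\<lambda>x y. \<Sum>n\<in>{1..<s}. L n x y) X Y"
  by (simp add: leader_value_def)

lemma leader_value_eq_at_minimax_point:
  "global_minimax_point (\<lambda>x y. (\<Sum>n\<in>{1..<s}. L n x y) - inner \<theta> x) X Y x y
    \<Longrightarrow> leader_value s \<theta> = (\<Sum>n\<in>{1..<s}. L n x y) - inner \<theta> x"
  unfolding leader_value_def by (rule minmax_eq_at_global_minimax_point)

lemma leader_value_le_at_argmax:
  assumes "x \<in> X" "is_argmax_on (\<lambda>y. \<Sum>n\<in>{1..<s}. L n x y) Y y"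
  shows "leader_value s \<theta> \<le> (\<Sum>n\<in>{1..<s}. L n x y) - inner \<theta> x"
proof -
  obtain B where "\<And>x y. x \<in> X \<Longrightarrow> y \<in> Y \<Longrightarrow> \<bar>(\<Sum>n\<in>{1..<s}. L n x y) - inner \<theta> x\<bar> \<le> B"
    using perturbed_cumulative_loss_bounded by blast
  then show ?thesis
    unfolding leader_value_def using assms
    by (intro minmax_le_at_argmax[where h = "\<lambda>x y. (\<Sum>n\<in>{1..<s}. L n x y) - inner \<theta> x"])
      (auto simp: is_argmax_on_diff_const)
qed

lemma loss_le_leader_value_increment:
  assumes "1 \<le> n" "x \<in> X" "y \<in> Y"
    and minimax: "global_minimax_point (\<lambda>x y. (\<Sum>k\<in>{1..<n+1}. L k x y) - inner \<theta> x) X Y x' y'"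
    and argmax: "is_argmax_on (\<lambda>y. \<Sum>k\<in>{1..<n}. L k x' y) Y y''"
  shows "L n x y \<le> leader_value (n+1) \<theta> - leader_value n \<theta> + G * (l1 (x - x') + l1 (y - y') + l1 (y'' - y'))"
proof -
  have "x' \<in> X" "y' \<in> Y" "y'' \<in> Y"
    using minimax argmax by (auto simp: global_minimax_point_def is_argmax_on_def)
  have split: "(\<Sum>k\<in>{1..<n+1}. L k x' v) = (\<Sum>k\<in>{1..<n}. L k x' v) + L n x' v" for v
    using \<open>1 \<le> n\<close> by simp
  have "(\<Sum>k\<in>{1..<n+1}. L k x' y'') - inner \<theta> x' \<le> (\<Sum>k\<in>{1..<n+1}. L k x' y') - inner \<theta> x'"
    using minimax \<open>x' \<in> X\<close> \<open>y'' \<in> Y\<close> by (auto simp: global_minimax_point_def)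
  moreover have "leader_value (n+1) \<theta> = (\<Sum>k\<in>{1..<n+1}. L k x' y') - inner \<theta> x'"
    by (rule leader_value_eq_at_minimax_point[OF minimax])
  moreover have "leader_value n \<theta> \<le> (\<Sum>k\<in>{1..<n}. L k x' y'') - inner \<theta> x'"
    by (rule leader_value_le_at_argmax[OF \<open>x' \<in> X\<close> argmax])
  ultimately have "L n x' y'' \<le> leader_value (n+1) \<theta> - leader_value n \<theta>"
    using split[of y''] by linarith
  moreover have "\<bar>L n x y - L n x' y\<bar> \<le> G * l1 (x - x')"
    using lipschitz_x[OF \<open>1 \<le> n\<close> \<open>y \<in> Y\<close>] \<open>x \<in> X\<close> \<open>x' \<in> X\<close> by (auto simp: l1_lipschitz_on_def)
  moreover have "\<bar>L n x' y - L n x' y'\<bar> \<le> G * l1 (y - y')"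
    using lipschitz_y[OF \<open>1 \<le> n\<close> \<open>x' \<in> X\<close>] \<open>y \<in> Y\<close> \<open>y' \<in> Y\<close> by (auto simp: l1_lipschitz_on_def)
  moreover have "\<bar>L n x' y'' - L n x' y'\<bar> \<le> G * l1 (y'' - y')"
    using lipschitz_y[OF \<open>1 \<le> n\<close> \<open>x' \<in> X\<close>] \<open>y'' \<in> Y\<close> \<open>y' \<in> Y\<close> by (auto simp: l1_lipschitz_on_def)
  ultimately show ?thesis
    by (simp add: distrib_left abs_le_iff)
qed

lemma leader_value_increment_le_loss:
  assumes "1 \<le> n"
    and minimax: "global_minimax_point (\<lambda>x y. (\<Sum>k\<in>{1..<n}. L k x y) - inner \<theta> x) X Y x y"
    and argmax: "is_argmax_on (\<lambda>y. \<Sum>k\<in>{1..<n+1}. L k x y) Y y'"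
  shows "leader_value (n+1) \<theta> - leader_value n \<theta> \<le> L n x y + G * l1 (y' - y)"
proof -
  have "x \<in> X" "y \<in> Y" "y' \<in> Y"
    using minimax argmax by (auto simp: global_minimax_point_def is_argmax_on_def)
  have "(\<Sum>k\<in>{1..<n}. L k x y') - inner \<theta> x \<le> (\<Sum>k\<in>{1..<n}. L k x y) - inner \<theta> x"
    using minimax \<open>x \<in> X\<close> \<open>y' \<in> Y\<close> by (auto simp: global_minimax_point_def)
  moreover have "leader_value n \<theta> = (\<Sum>k\<in>{1..<n}. L k x y) - inner \<theta> x"
    by (rule leader_value_eq_at_minimax_point[OF minimax])
  moreover have "leader_value (n+1) \<theta> \<le> (\<Sum>k\<in>{1..<n+1}. L k x y') - inner \<theta> x"
    by (rule leader_value_le_at_argmax[OF \<open>x \<in> X\<close> argmax])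
  moreover have "(\<Sum>k\<in>{1..<n+1}. L k x y') = (\<Sum>k\<in>{1..<n}. L k x y') + L n x y'"
    using \<open>1 \<le> n\<close> by simp
  moreover have "\<bar>L n x y' - L n x y\<bar> \<le> G * l1 (y' - y)"
    using lipschitz_y[OF \<open>1 \<le> n\<close> \<open>x \<in> X\<close>] \<open>y \<in> Y\<close> \<open>y' \<in> Y\<close> by (auto simp: l1_lipschitz_on_def)
  ultimately show ?thesis
    by (simp add: abs_le_iff)
qed

end

lemma online_minimax_game_Ybox:
  assumes "compact X" "X \<noteq> {}" "0 \<le> ymax" "0 \<le> G"
    and "\<And>n y. 1 \<le> n \<Longrightarrow> y \<in> Ybox ymax \<Longrightarrow> l1_lipschitz_on G X (\<lambda>x. L n x y)"
    and "\<And>n x. 1 \<le> n \<Longrightarrow> x \<in> X \<Longrightarrow> l1_lipschitz_on G (Ybox ymax) (\<lambda>y. L n x y)"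
  shows "online_minimax_game X (Ybox ymax) L G"
proof
  show "Ybox ymax \<noteq> {}"
    using zero_mem_Ybox[OF assms(3)] by auto
  show "bdd_above (l1 ` X)"
    using assms(1) by (rule bdd_above_l1_compact)
  show "bdd_above (l1 ` Ybox ymax)"
    by (rule bdd_above_l1_Ybox)
qed (use assms in auto)

section \<open>Expected regret of the perturbed leader\<close>

locale perturbed_leader = online_minimax_game X Y L G + prob_space M
  for X :: "(real ^ 'd) set" and Y :: "(real ^ 'i) set"
    and L :: "nat \<Rightarrow> real ^ 'd \<Rightarrow> real ^ 'i \<Rightarrow> real" and G :: real and M :: "'w measure" +
  fixes \<eta> :: real and \<theta> :: "nat \<Rightarrow> 'w \<Rightarrow> real ^ 'd"
  assumes \<eta>_pos: "0 < \<eta>"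
    and \<theta>_exponential: "\<And>s j. 1 \<le> s \<Longrightarrow> distributed M lborel (\<lambda>\<omega>. \<theta> s \<omega> $ j) (exponential_density \<eta>)"
    and \<theta>_indep: "indep_vars (\<lambda>_. borel) (\<lambda>p \<omega>. \<theta> (fst p) \<omega> $ snd p) ({1..} \<times> UNIV)"
begin

lemma measurable_\<theta>: "1 \<le> r \<Longrightarrow> \<theta> r \<in> borel_measurable M"
  using \<theta>_exponential by (intro borel_measurable_vec) (simp add: distributed_def)

lemma integrable_l1_\<theta>: "1 \<le> r \<Longrightarrow> integrable M (\<lambda>\<omega>. l1 (\<theta> r \<omega>))"
  unfolding l1_def using erlang_ith_moment_integrable[OF \<eta>_pos \<theta>_exponential, of r _ 1]
  by (intro Bochner_Integration.integrable_sum integrable_abs) simp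

lemma integrable_leader_value:
  assumes "1 \<le> r"
  shows "integrable M (\<lambda>\<omega>. leader_value s (\<theta> r \<omega>))"
proof (rule Bochner_Integration.integrable_bound)
  show "integrable M (\<lambda>\<omega>. \<bar>leader_value s 0\<bar> + xmax * l1 (\<theta> r \<omega>))"
    using integrable_l1_\<theta>[OF assms] by simp
  show "(\<lambda>\<omega>. leader_value s (\<theta> r \<omega>)) \<in> borel_measurable M"
    using measurable_compose[OF measurable_\<theta>[OF assms] borel_measurable_leader_value] .
  have "\<bar>leader_value s \<theta>'\<bar> \<le> \<bar>leader_value s 0\<bar> + xmax * l1 \<theta>'" for \<theta>'
    using leader_value_lipschitz[of s \<theta>' 0] by simp
  then show "AE \<omega> in M. norm (leader_value s (\<theta> r \<omega>)) \<le> norm (\<bar>leader_value s 0\<bar> + xmax * l1 (\<theta> r \<omega>))"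
    by (intro AE_I2) (metis abs_ge_self order_trans real_norm_def)
qed

(* The only use of independence: all \<theta> r have the same joint law. *)
lemma integral_leader_value_eq:
  assumes "1 \<le> r"
  shows "(\<integral>\<omega>. leader_value s (\<theta> r \<omega>) \<partial>M) = (\<integral>\<omega>. leader_value s (\<theta> 1 \<omega>) \<partial>M)"
  using integral_vec_of_indep_family[OF \<theta>_indep _ \<theta>_exponential borel_measurable_leader_value] assms
  by simp

lemma integral_leader_value_near_minmax:
  assumes "1 \<le> r"
  shows "\<bar>(\<integral>\<omega>. leader_value s (\<theta> r \<omega>) \<partial>M) - minmax (\<lambda>x y. \<Sum>n\<in>{1..<s}. L n x y) X Y\<bar>
    \<le> (ln (real CARD('d)) + 1) / \<eta> * xmax"
proof -
  define a where "a = ln (real CARD('d)) / \<eta>"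
  have "0 \<le> a"
    unfolding a_def using \<eta>_pos by simp
  note majorant = integral_linf_majorant_exponential[OF \<eta>_pos \<theta>_exponential[OF assms], folded a_def]
  have pointwise: "\<bar>leader_value s (\<theta> r \<omega>) - leader_value s 0\<bar> \<le> linf_majorant a (\<theta> r \<omega>) * xmax" for \<omega>
  proof (rule leader_value_diff_le)
    fix x assume "x \<in> X"
    then have "linf_majorant a (\<theta> r \<omega>) * l1 x \<le> linf_majorant a (\<theta> r \<omega>) * xmax"
      using linf_majorant_nonneg[OF \<open>0 \<le> a\<close>] l1_le_xmax by (intro mult_left_mono) auto
    then show "\<bar>inner (\<theta> r \<omega> - 0) x\<bar> \<le> linf_majorant a (\<theta> r \<omega>) * xmax"
      using abs_inner_le_linf_majorant[OF \<open>0 \<le> a\<close>, of "\<theta> r \<omega>" x] by simp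
  qed
  have "\<bar>(\<integral>\<omega>. leader_value s (\<theta> r \<omega>) \<partial>M) - leader_value s 0\<bar>
      = \<bar>\<integral>\<omega>. leader_value s (\<theta> r \<omega>) - leader_value s 0 \<partial>M\<bar>"
    using integrable_leader_value[OF assms] by (simp add: prob_space)
  also have "\<dots> \<le> (\<integral>\<omega>. linf_majorant a (\<theta> r \<omega>) * xmax \<partial>M)"
    using integrable_leader_value[OF assms] majorant(1) pointwise
    by (intro order_trans[OF integral_abs_bound] integral_mono) auto
  also have "\<dots> = (ln (real CARD('d)) + 1) / \<eta> * xmax"
    using majorant(2) by simp
  finally show ?thesis
    by (simp add: leader_value_zero)
qed

lemma regret_constant_nonneg: "0 \<le> (ln (real CARD('d)) + 1) / \<eta> * xmax"
  using \<eta>_pos xmax_nonneg by simp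

lemma abs_integral_leader_value_gap_le:
  "\<bar>(\<integral>\<omega>. leader_value t (\<theta> 1 \<omega>) \<partial>M) - (\<integral>\<omega>. leader_value 1 (\<theta> 1 \<omega>) \<partial>M)
      - minmax (\<lambda>x y. \<Sum>n\<in>{1..<t}. L n x y) X Y\<bar>
    \<le> 2 * ((ln (real CARD('d)) + 1) / \<eta> * xmax)"
proof -
  have "\<bar>\<integral>\<omega>. leader_value 1 (\<theta> 1 \<omega>) \<partial>M\<bar> \<le> (ln (real CARD('d)) + 1) / \<eta> * xmax"
    using integral_leader_value_near_minmax[of 1 1] X_nonempty Y_nonempty by (simp add: minmax_def)
  then show ?thesis
    using integral_leader_value_near_minmax[of 1 t] by (simp add: abs_le_iff)
qed

lemma integral_sum_le_by_leader_value_increments: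
  fixes A D :: "nat \<Rightarrow> 'w \<Rightarrow> real" and k :: "nat \<Rightarrow> nat"
  assumes "1 \<le> t" and k: "\<And>n. n \<in> {1..<t} \<Longrightarrow> 1 \<le> k n"
    and D: "\<And>n. n \<in> {1..<t} \<Longrightarrow> integrable M (D n)" "\<And>n \<omega>. n \<in> {1..<t} \<Longrightarrow> 0 \<le> D n \<omega>"
    and step: "\<And>n \<omega>. n \<in> {1..<t} \<Longrightarrow> \<omega> \<in> space M \<Longrightarrow>
      A n \<omega> \<le> D n \<omega> + leader_value (n+1) (\<theta> (k n) \<omega>) - leader_value n (\<theta> (k n) \<omega>)"
  shows "(\<integral>\<omega>. (\<Sum>n\<in>{1..<t}. A n \<omega>) - minmax (\<lambda>x y. \<Sum>n\<in>{1..<t}. L n x y) X Y \<partial>M)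
    \<le> (\<Sum>n\<in>{1..<t}. integral\<^sup>L M (D n)) + 2 * ((ln (real CARD('d)) + 1) / \<eta> * xmax)"
proof (rule integral_sum_le_telescoping[where Z = "\<lambda>s n \<omega>. leader_value s (\<theta> (k n) \<omega>)"
      and e = "\<lambda>s. \<integral>\<omega>. leader_value s (\<theta> 1 \<omega>) \<partial>M" and A = A and D = D
      and m = "minmax (\<lambda>x y. \<Sum>n\<in>{1..<t}. L n x y) X Y", OF \<open>1 \<le> t\<close> D(1) _ _ step])
  show "integrable M (\<lambda>\<omega>. leader_value s (\<theta> (k n) \<omega>))"
    and "(\<integral>\<omega>. leader_value s (\<theta> (k n) \<omega>) \<partial>M) = (\<integral>\<omega>. leader_value s (\<theta> 1 \<omega>) \<partial>M)"
    if "n \<in> {1..<t}" for s n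
    using k[OF that] by (rule integrable_leader_value, rule integral_leader_value_eq)
  have "0 \<le> (\<Sum>n\<in>{1..<t}. integral\<^sup>L M (D n))"
    using D(2) by (intro sum_nonneg integral_nonneg_AE AE_I2)
  then show "0 \<le> (\<Sum>n\<in>{1..<t}. integral\<^sup>L M (D n)) + 2 * ((ln (real CARD('d)) + 1) / \<eta> * xmax)"
    using regret_constant_nonneg by simp
  show "(\<Sum>n\<in>{1..<t}. integral\<^sup>L M (D n)) + (\<integral>\<omega>. leader_value t (\<theta> 1 \<omega>) \<partial>M)
      - (\<integral>\<omega>. leader_value 1 (\<theta> 1 \<omega>) \<partial>M) - minmax (\<lambda>x y. \<Sum>n\<in>{1..<t}. L n x y) X Y
    \<le> (\<Sum>n\<in>{1..<t}. integral\<^sup>L M (D n)) + 2 * ((ln (real CARD('d)) + 1) / \<eta> * xmax)"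
    using abs_integral_leader_value_gap_le[of t] by linarith
qed

lemma integral_minmax_diff_le_by_leader_value_increments:
  fixes A D :: "nat \<Rightarrow> 'w \<Rightarrow> real" and k :: "nat \<Rightarrow> nat"
  assumes "1 \<le> t" and k: "\<And>n. n \<in> {1..<t} \<Longrightarrow> 1 \<le> k n"
    and D: "\<And>n. n \<in> {1..<t} \<Longrightarrow> integrable M (D n)" "\<And>n \<omega>. n \<in> {1..<t} \<Longrightarrow> 0 \<le> D n \<omega>"
    and step: "\<And>n \<omega>. n \<in> {1..<t} \<Longrightarrow> \<omega> \<in> space M \<Longrightarrow>
      leader_value (n+1) (\<theta> (k n) \<omega>) - leader_value n (\<theta> (k n) \<omega>) \<le> A n \<omega> + D n \<omega>"
  shows "(\<integral>\<omega>. minmax (\<lambda>x y. \<Sum>n\<in>{1..<t}. L n x y) X Y - (\<Sum>n\<in>{1..<t}. A n \<omega>) \<partial>M)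
    \<le> (\<Sum>n\<in>{1..<t}. integral\<^sup>L M (D n)) + 2 * ((ln (real CARD('d)) + 1) / \<eta> * xmax)"
proof -
  have "(\<integral>\<omega>. minmax (\<lambda>x y. \<Sum>n\<in>{1..<t}. L n x y) X Y - (\<Sum>n\<in>{1..<t}. A n \<omega>) \<partial>M)
      = (\<integral>\<omega>. (\<Sum>n\<in>{1..<t}. - A n \<omega>) - (- minmax (\<lambda>x y. \<Sum>n\<in>{1..<t}. L n x y) X Y) \<partial>M)"
    by (simp add: sum_negf)
  also have "\<dots> \<le> (\<Sum>n\<in>{1..<t}. integral\<^sup>L M (D n)) + 2 * ((ln (real CARD('d)) + 1) / \<eta> * xmax)"
  proof (rule integral_sum_le_telescoping[where Z = "\<lambda>s n \<omega>. - leader_value s (\<theta> (k n) \<omega>)"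
        and e = "\<lambda>s. - (\<integral>\<omega>. leader_value s (\<theta> 1 \<omega>) \<partial>M)" and A = "\<lambda>n \<omega>. - A n \<omega>" and D = D
        and m = "- minmax (\<lambda>x y. \<Sum>n\<in>{1..<t}. L n x y) X Y", OF \<open>1 \<le> t\<close> D(1)])
    show "integrable M (\<lambda>\<omega>. - leader_value s (\<theta> (k n) \<omega>))"
      and "(\<integral>\<omega>. - leader_value s (\<theta> (k n) \<omega>) \<partial>M) = - (\<integral>\<omega>. leader_value s (\<theta> 1 \<omega>) \<partial>M)"
      if "n \<in> {1..<t}" for s n
      using integrable_leader_value[OF k[OF that]] integral_leader_value_eq[OF k[OF that]] by simp_all
    show "- A n \<omega> \<le> D n \<omega> + - leader_value (n+1) (\<theta> (k n) \<omega>) - - leader_value n (\<theta> (k n) \<omega>)"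
      if "n \<in> {1..<t}" "\<omega> \<in> space M" for n \<omega>
      using step[OF that] by linarith
    have "0 \<le> (\<Sum>n\<in>{1..<t}. integral\<^sup>L M (D n))"
      using D(2) by (intro sum_nonneg integral_nonneg_AE AE_I2)
    then show "0 \<le> (\<Sum>n\<in>{1..<t}. integral\<^sup>L M (D n)) + 2 * ((ln (real CARD('d)) + 1) / \<eta> * xmax)"
      using regret_constant_nonneg by simp
    show "(\<Sum>n\<in>{1..<t}. integral\<^sup>L M (D n)) + - (\<integral>\<omega>. leader_value t (\<theta> 1 \<omega>) \<partial>M)
        - - (\<integral>\<omega>. leader_value 1 (\<theta> 1 \<omega>) \<partial>M) - - minmax (\<lambda>x y. \<Sum>n\<in>{1..<t}. L n x y) X Y
      \<le> (\<Sum>n\<in>{1..<t}. integral\<^sup>L M (D n)) + 2 * ((ln (real CARD('d)) + 1) / \<eta> * xmax)"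
      using abs_integral_leader_value_gap_le[of t] by linarith
  qed
  finally show ?thesis .
qed

end

locale perturbed_leader_play = perturbed_leader X Y L G M \<eta> \<theta>
  for X :: "(real ^ 'd) set" and Y :: "(real ^ 'i) set"
    and L :: "nat \<Rightarrow> real ^ 'd \<Rightarrow> real ^ 'i \<Rightarrow> real" and G :: real and M :: "'w measure"
    and \<eta> :: real and \<theta> :: "nat \<Rightarrow> 'w \<Rightarrow> real ^ 'd" +
  fixes xs :: "nat \<Rightarrow> 'w \<Rightarrow> real ^ 'd" and ys ys' ys'' :: "nat \<Rightarrow> 'w \<Rightarrow> real ^ 'i"
  assumes play_minimax: "\<And>s \<omega>. 1 \<le> s \<Longrightarrow> \<omega> \<in> space M \<Longrightarrow>
      global_minimax_point (\<lambda>x y. (\<Sum>n\<in>{1..<s}. L n x y) - inner (\<theta> s \<omega>) x) X Y (xs s \<omega>) (ys s \<omega>)"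
    and ys'_argmax: "\<And>s \<omega>. 1 \<le> s \<Longrightarrow> \<omega> \<in> space M \<Longrightarrow>
      is_argmax_on (\<lambda>y. \<Sum>n\<in>{1..<s+1}. L n (xs s \<omega>) y) Y (ys' s \<omega>)"
    and ys''_argmax: "\<And>s \<omega>. 1 \<le> s \<Longrightarrow> \<omega> \<in> space M \<Longrightarrow>
      is_argmax_on (\<lambda>y. \<Sum>n\<in>{1..<s}. L n (xs (s+1) \<omega>) y) Y (ys'' s \<omega>)"
    and play_measurable: "\<And>s. 1 \<le> s \<Longrightarrow> xs s \<in> borel_measurable M \<and> ys s \<in> borel_measurable M
      \<and> ys' s \<in> borel_measurable M \<and> ys'' s \<in> borel_measurable M"
begin

lemma play_mem:
  assumes "1 \<le> s" "\<omega> \<in> space M"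
  shows "xs s \<omega> \<in> X" "ys s \<omega> \<in> Y" "ys' s \<omega> \<in> Y" "ys'' s \<omega> \<in> Y"
  using play_minimax[OF assms] ys'_argmax[OF assms] ys''_argmax[OF assms]
  by (auto simp: global_minimax_point_def is_argmax_on_def)

lemma integrable_l1_play_diff:
  assumes "1 \<le> n"
  shows "integrable M (\<lambda>\<omega>. l1 (xs n \<omega> - xs (n+1) \<omega>))"
    and "integrable M (\<lambda>\<omega>. l1 (ys n \<omega> - ys (n+1) \<omega>))"
    and "integrable M (\<lambda>\<omega>. l1 (ys' n \<omega> - ys (n+1) \<omega>))"
    and "integrable M (\<lambda>\<omega>. l1 (ys'' n \<omega> - ys (n+1) \<omega>))"
  using assms play_measurable[of n] play_measurable[of "n+1"] play_mem[of n] play_mem[of "n+1"]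
  by (auto intro!: integrable_l1_diff bdd_above_l1_X bdd_above_l1_Y)

theorem expected_regret_upper:
  assumes "1 \<le> t"
  shows "(\<integral>\<omega>. (\<Sum>n\<in>{1..<t}. L n (xs n \<omega>) (ys n \<omega>)) - minmax (\<lambda>x y. \<Sum>n\<in>{1..<t}. L n x y) X Y \<partial>M)
    \<le> G * (\<Sum>n\<in>{1..<t}. (\<integral>\<omega>. l1 (xs n \<omega> - xs (n+1) \<omega>) \<partial>M) + (\<integral>\<omega>. l1 (ys n \<omega> - ys (n+1) \<omega>) \<partial>M)
                          + (\<integral>\<omega>. l1 (ys'' n \<omega> - ys (n+1) \<omega>) \<partial>M))
      + 2 * ((ln (real CARD('d)) + 1) / \<eta> * xmax)"
proof -
  define D where "D n \<omega> = G * (l1 (xs n \<omega> - xs (n+1) \<omega>) + l1 (ys n \<omega> - ys (n+1) \<omega>)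
    + l1 (ys'' n \<omega> - ys (n+1) \<omega>))" for n \<omega>
  have D_int: "integrable M (D n)" and D_integral: "integral\<^sup>L M (D n)
      = G * ((\<integral>\<omega>. l1 (xs n \<omega> - xs (n+1) \<omega>) \<partial>M) + (\<integral>\<omega>. l1 (ys n \<omega> - ys (n+1) \<omega>) \<partial>M)
        + (\<integral>\<omega>. l1 (ys'' n \<omega> - ys (n+1) \<omega>) \<partial>M))" if "n \<in> {1..<t}" for n
    using integrable_l1_play_diff[of n] that unfolding D_def by auto
  have "(\<integral>\<omega>. (\<Sum>n\<in>{1..<t}. L n (xs n \<omega>) (ys n \<omega>)) - minmax (\<lambda>x y. \<Sum>n\<in>{1..<t}. L n x y) X Y \<partial>M)
      \<le> (\<Sum>n\<in>{1..<t}. integral\<^sup>L M (D n)) + 2 * ((ln (real CARD('d)) + 1) / \<eta> * xmax)"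
  proof (rule integral_sum_le_by_leader_value_increments[where A = "\<lambda>n \<omega>. L n (xs n \<omega>) (ys n \<omega>)"
        and k = "\<lambda>n. n+1", OF assms _ D_int])
    show "0 \<le> D n \<omega>" for n \<omega>
      unfolding D_def using G_nonneg by (simp add: add_nonneg_nonneg l1_nonneg)
    fix n \<omega> assume "n \<in> {1..<t}" "\<omega> \<in> space M"
    then have "1 \<le> n" by simp
    with \<open>\<omega> \<in> space M\<close> show "L n (xs n \<omega>) (ys n \<omega>)
        \<le> D n \<omega> + leader_value (n+1) (\<theta> (n+1) \<omega>) - leader_value n (\<theta> (n+1) \<omega>)"
      using loss_le_leader_value_increment[OF \<open>1 \<le> n\<close> play_mem(1,2)[OF \<open>1 \<le> n\<close> \<open>\<omega> \<in> space M\<close>]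
          play_minimax[of "n+1" \<omega>] ys''_argmax[OF \<open>1 \<le> n\<close> \<open>\<omega> \<in> space M\<close>]]
      unfolding D_def by simp
  qed simp_all
  also have "(\<Sum>n\<in>{1..<t}. integral\<^sup>L M (D n)) = G * (\<Sum>n\<in>{1..<t}. (\<integral>\<omega>. l1 (xs n \<omega> - xs (n+1) \<omega>) \<partial>M)
      + (\<integral>\<omega>. l1 (ys n \<omega> - ys (n+1) \<omega>) \<partial>M) + (\<integral>\<omega>. l1 (ys'' n \<omega> - ys (n+1) \<omega>) \<partial>M))"
    unfolding sum_distrib_left by (rule sum.cong[OF refl D_integral])
  finally show ?thesis .
qed

theorem expected_regret_lower:
  assumes "1 \<le> t"
  shows "(\<integral>\<omega>. minmax (\<lambda>x y. \<Sum>n\<in>{1..<t}. L n x y) X Y - (\<Sum>n\<in>{1..<t}. L n (xs n \<omega>) (ys n \<omega>)) \<partial>M)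
    \<le> G * (\<Sum>n\<in>{1..<t}. 2 * (\<integral>\<omega>. l1 (xs n \<omega> - xs (n+1) \<omega>) \<partial>M) + (\<integral>\<omega>. l1 (ys n \<omega> - ys (n+1) \<omega>) \<partial>M)
                          + (\<integral>\<omega>. l1 (ys' n \<omega> - ys (n+1) \<omega>) \<partial>M))
      + 2 * ((ln (real CARD('d)) + 1) / \<eta> * xmax)"
proof -
  define D where "D n \<omega> = G * (l1 (ys n \<omega> - ys (n+1) \<omega>) + l1 (ys' n \<omega> - ys (n+1) \<omega>))" for n \<omega>
  have D_int: "integrable M (D n)" and "integral\<^sup>L M (D n)
      = G * ((\<integral>\<omega>. l1 (ys n \<omega> - ys (n+1) \<omega>) \<partial>M) + (\<integral>\<omega>. l1 (ys' n \<omega> - ys (n+1) \<omega>) \<partial>M))"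
    if "n \<in> {1..<t}" for n
    using integrable_l1_play_diff[of n] that unfolding D_def by auto
  moreover have "0 \<le> (\<integral>\<omega>. l1 (xs n \<omega> - xs (n+1) \<omega>) \<partial>M)" for n
    by (intro integral_nonneg_AE AE_I2 l1_nonneg)
  ultimately have D_le: "integral\<^sup>L M (D n) \<le> G * (2 * (\<integral>\<omega>. l1 (xs n \<omega> - xs (n+1) \<omega>) \<partial>M)
      + (\<integral>\<omega>. l1 (ys n \<omega> - ys (n+1) \<omega>) \<partial>M) + (\<integral>\<omega>. l1 (ys' n \<omega> - ys (n+1) \<omega>) \<partial>M))"
    if "n \<in> {1..<t}" for n
    using that G_nonneg by (simp add: mult_left_mono)
  have "(\<integral>\<omega>. minmax (\<lambda>x y. \<Sum>n\<in>{1..<t}. L n x y) X Y - (\<Sum>n\<in>{1..<t}. L n (xs n \<omega>) (ys n \<omega>)) \<partial>M)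
      \<le> (\<Sum>n\<in>{1..<t}. integral\<^sup>L M (D n)) + 2 * ((ln (real CARD('d)) + 1) / \<eta> * xmax)"
  proof (rule integral_minmax_diff_le_by_leader_value_increments[where A = "\<lambda>n \<omega>. L n (xs n \<omega>) (ys n \<omega>)"
        and k = "\<lambda>n. n", OF assms _ D_int])
    show "0 \<le> D n \<omega>" for n \<omega>
      unfolding D_def using G_nonneg by (simp add: add_nonneg_nonneg l1_nonneg)
    fix n \<omega> assume "n \<in> {1..<t}" "\<omega> \<in> space M"
    then have "1 \<le> n" by simp
    have "l1 (ys' n \<omega> - ys n \<omega>) \<le> l1 (ys n \<omega> - ys (n+1) \<omega>) + l1 (ys' n \<omega> - ys (n+1) \<omega>)"
      using l1_triangle[of "ys' n \<omega>" "ys n \<omega>" "ys (n+1) \<omega>"] l1_minus_commute[of "ys (n+1) \<omega>" "ys n \<omega>"]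
      by linarith
    with \<open>1 \<le> n\<close> \<open>\<omega> \<in> space M\<close> show "leader_value (n+1) (\<theta> n \<omega>) - leader_value n (\<theta> n \<omega>)
        \<le> L n (xs n \<omega>) (ys n \<omega>) + D n \<omega>"
      using leader_value_increment_le_loss[OF \<open>1 \<le> n\<close> play_minimax ys'_argmax] G_nonneg
      unfolding D_def by (smt (verit) mult_left_mono)
  qed simp_all
  also have "\<dots> \<le> G * (\<Sum>n\<in>{1..<t}. 2 * (\<integral>\<omega>. l1 (xs n \<omega> - xs (n+1) \<omega>) \<partial>M)
      + (\<integral>\<omega>. l1 (ys n \<omega> - ys (n+1) \<omega>) \<partial>M) + (\<integral>\<omega>. l1 (ys' n \<omega> - ys (n+1) \<omega>) \<partial>M))
      + 2 * ((ln (real CARD('d)) + 1) / \<eta> * xmax)"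
    unfolding sum_distrib_left using D_le by (intro add_right_mono sum_mono)
  finally show ?thesis .
qed

end

theorem lemma2:
  fixes M :: "'w measure"
    and X :: "(real ^ 'd) set"
    and f :: "nat \<Rightarrow> real ^ 'd \<Rightarrow> real"
    and c :: "nat \<Rightarrow> 'i::finite \<Rightarrow> real ^ 'd \<Rightarrow> real"
    and b :: "'i \<Rightarrow> real"
    and lam ymax G0 G :: real
    and T t :: nat
    and \<theta> :: "nat \<Rightarrow> 'w \<Rightarrow> real ^ 'd"
    and xs :: "nat \<Rightarrow> 'w \<Rightarrow> real ^ 'd"
    and ys ys' ys'' :: "nat \<Rightarrow> 'w \<Rightarrow> real ^ 'i"
  defines "Y \<equiv> Ybox ymax"
    and "xmax \<equiv> (SUP x\<in>X. l1 x)"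
    and "\<eta> \<equiv> real T powr (-2/3)"
    and "Lb \<equiv> Lbar f c b lam"
  assumes X_compact: "compact X" and X_ne: "X \<noteq> {}"
    and T_pos: "T \<ge> 1"
    and f_lip: "\<And>n. l1_lipschitz_on G0 X (f n)"
    and c_lip: "\<And>n i. l1_lipschitz_on G0 X (c n i)"
    and b_nonneg: "\<And>i. b i \<ge> 0"
    and lam_pos: "lam > 0" and ymax_pos: "ymax > 0"
    and G_pos: "G > 0"
    and G_lip_x: "\<And>n y. n \<ge> 1 \<Longrightarrow> y \<in> Y \<Longrightarrow> l1_lipschitz_on G X (\<lambda>x. Lb n x y)"
    and G_lip_y: "\<And>n x. n \<ge> 1 \<Longrightarrow> x \<in> X \<Longrightarrow> l1_lipschitz_on G Y (\<lambda>y. Lb n x y)"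
    and M_prob: "prob_space M"
    and \<theta>_exp: "\<And>s j. s \<ge> 1 \<Longrightarrow> distributed M lborel (\<lambda>\<omega>. \<theta> s \<omega> $ j) (exponential_density \<eta>)"
    and \<theta>_indep: "prob_space.indep_vars M (\<lambda>_. borel) (\<lambda>p \<omega>. \<theta> (fst p) \<omega> $ snd p) ({1..} \<times> UNIV)"
    and minimax: "\<And>s \<omega>. s \<ge> 1 \<Longrightarrow> \<omega> \<in> space M \<Longrightarrow>
        global_minimax_point (\<lambda>x y. (\<Sum>n\<in>{1..<s}. Lb n x y) - inner (\<theta> s \<omega>) x) X Y (xs s \<omega>) (ys s \<omega>)"
    and ys'_def: "\<And>s \<omega>. s \<ge> 1 \<Longrightarrow> \<omega> \<in> space M \<Longrightarrow>
        is_argmax_on (\<lambda>y. (\<Sum>n\<in>{1..<s+1}. Lb n (xs s \<omega>) y) - inner (\<theta> (s+1) \<omega>) (xs s \<omega>)) Y (ys' s \<omega>)"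
    and ys''_def: "\<And>s \<omega>. s \<ge> 1 \<Longrightarrow> \<omega> \<in> space M \<Longrightarrow>
        is_argmax_on (\<lambda>y. (\<Sum>n\<in>{1..<s}. Lb n (xs (s+1) \<omega>) y) - inner (\<theta> s \<omega>) (xs (s+1) \<omega>)) Y (ys'' s \<omega>)"
    and meas: "\<And>s. s \<ge> 1 \<Longrightarrow> xs s \<in> borel_measurable M \<and> ys s \<in> borel_measurable M
        \<and> ys' s \<in> borel_measurable M \<and> ys'' s \<in> borel_measurable M"
    and t_pos: "t \<ge> 1"
  shows
    "(\<integral>\<omega>. (\<Sum>n\<in>{1..<t}. Lb n (xs n \<omega>) (ys n \<omega>)) - minmax (\<lambda>x y. \<Sum>n\<in>{1..<t}. Lb n x y) X Y \<partial>M)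
       \<le> G * (\<Sum>n\<in>{1..<t}. (\<integral>\<omega>. l1 (xs n \<omega> - xs (n+1) \<omega>) \<partial>M)
                             + (\<integral>\<omega>. l1 (ys n \<omega> - ys (n+1) \<omega>) \<partial>M)
                             + (\<integral>\<omega>. l1 (ys'' n \<omega> - ys (n+1) \<omega>) \<partial>M))
         + 2 * real T powr (2/3) * (ln (real CARD('d)) + 1) * xmax
     \<and> (\<integral>\<omega>. minmax (\<lambda>x y. \<Sum>n\<in>{1..<t}. Lb n x y) X Y - (\<Sum>n\<in>{1..<t}. Lb n (xs n \<omega>) (ys n \<omega>)) \<partial>M)
       \<le> G * (\<Sum>n\<in>{1..<t}. 2 * (\<integral>\<omega>. l1 (xs n \<omega> - xs (n+1) \<omega>) \<partial>M)
                             + (\<integral>\<omega>. l1 (ys n \<omega> - ys (n+1) \<omega>) \<partial>M)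
                             + (\<integral>\<omega>. l1 (ys' n \<omega> - ys (n+1) \<omega>) \<partial>M))
         + 2 * real T powr (2/3) * (ln (real CARD('d)) + 1) * xmax"
proof -
  have game: "online_minimax_game X Y Lb G"
    unfolding Y_def using X_compact X_ne ymax_pos G_pos G_lip_x G_lip_y
    by (intro online_minimax_game_Ybox) (auto simp: Y_def)
  interpret game: perturbed_leader_play X Y Lb G M \<eta> \<theta> xs ys ys' ys''
  proof (intro perturbed_leader_play.intro perturbed_leader.intro perturbed_leader_axioms.intro
      perturbed_leader_play_axioms.intro game M_prob)
    show "0 < \<eta>"
      unfolding \<eta>_def using T_pos by simp
    show "is_argmax_on (\<lambda>y. \<Sum>n\<in>{1..<s+1}. Lb n (xs s \<omega>) y) Y (ys' s \<omega>)"
      and "is_argmax_on (\<lambda>y. \<Sum>n\<in>{1..<s}. Lb n (xs (s+1) \<omega>) y) Y (ys'' s \<omega>)"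
      if "1 \<le> s" "\<omega> \<in> space M" for s \<omega>
      using ys'_def[OF that] ys''_def[OF that] by (simp_all only: is_argmax_on_diff_const)
  qed (fact \<theta>_exp \<theta>_indep minimax meas)+
  have "game.xmax = xmax"
    unfolding game.xmax_def xmax_def ..
  moreover have "(ln (real CARD('d)) + 1) / \<eta> = real T powr (2/3) * (ln (real CARD('d)) + 1)"
    unfolding \<eta>_def divide_powr_uminus by simp
  ultimately have regret_constant:
    "2 * ((ln (real CARD('d)) + 1) / \<eta> * game.xmax) = 2 * real T powr (2/3) * (ln (real CARD('d)) + 1) * xmax"
    by simp
  show ?thesis
    using game.expected_regret_upper[OF t_pos, unfolded regret_constant]
      game.expected_regret_lower[OF t_pos, unfolded regret_constant]
    by (rule conjI)
qed

end
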